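(* For every triangle $ABC$ with $b=c>a$, we have $AX_2<AX_{15}<AX_{17}$; that is, in the isosceles order, $X_2\prec X_{15}\prec X_{17}$.
   Context: $X_n$ denotes the $n$-th triangle center listed in Kimberling's Encyclopedia of Triangle Centers (ETC), given by barycentric coordinates in terms of $a=BC$, $b=CA$, $c=AB$. The isosceles order: $P\prec Q$ if $P$ is closer to $A$ than $Q$ in every isosceles triangle $ABC$ with $b=c>a$. *)

theory Defs
  imports "HOL-Analysis.Analysis"
begin

definition bary :: "complex \<Rightarrow> complex \<Rightarrow> complex \<Rightarrow> real \<Rightarrow> real \<Rightarrow> real \<Rightarrow> complex" where
  "bary A B C u v w = (u *\<^sub>R A + v *\<^sub>R B + w *\<^sub>R C) /\<^sub>R (u + v + w)"

definition opp_angle :: "real \<Rightarrow> real \<Rightarrow> real \<Rightarrow> real" where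
  "opp_angle a b c = arccos ((b\<^sup>2 + c\<^sup>2 - a\<^sup>2) / (2 * b * c))"

definition X2 :: "complex \<Rightarrow> complex \<Rightarrow> complex \<Rightarrow> complex" where
  "X2 A B C = bary A B C 1 1 1"

text \<open>X(15): trilinears sin(A + pi/3) : ..., i.e. barycentrics a sin(A + pi/3) : ...\<close>
definition X15 :: "complex \<Rightarrow> complex \<Rightarrow> complex \<Rightarrow> complex" where
  "X15 A B C = (let a = dist B C; b = dist C A; c = dist A B;
       \<alpha> = opp_angle a b c; \<beta> = opp_angle b c a; \<gamma> = opp_angle c a b
     in bary A B C (a * sin (\<alpha> + pi/3)) (b * sin (\<beta> + pi/3)) (c * sin (\<gamma> + pi/3)))"

text \<open>X(17): trilinears csc(A + pi/6) : ..., i.e. barycentrics a / sin(A + pi/6) : ...\<close>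
definition X17 :: "complex \<Rightarrow> complex \<Rightarrow> complex \<Rightarrow> complex" where
  "X17 A B C = (let a = dist B C; b = dist C A; c = dist A B;
       \<alpha> = opp_angle a b c; \<beta> = opp_angle b c a; \<gamma> = opp_angle c a b
     in bary A B C (a / sin (\<alpha> + pi/6)) (b / sin (\<beta> + pi/6)) (c / sin (\<gamma> + pi/6)))"

end

theory Submission
  imports Defs
begin

text \<open>Write the triangle with legs \<open>b = c\<close>, base \<open>a = 2 b cos \<beta>\<close> and apex angle \<open>\<alpha> = \<pi> - 2\<beta>\<close>,
  where \<open>\<pi>/3 < \<beta> < \<pi>/2\<close>. All three centers have barycentrics of the form \<open>u : v : v\<close>, so they
  lie on the median from \<open>A\<close>, at distance \<open>|2A - B - C| / (u/v + 2)\<close> from \<open>A\<close>. It therefore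
  suffices to show \<open>1 > u\<^sub>1\<^sub>5/v\<^sub>1\<^sub>5 > u\<^sub>1\<^sub>7/v\<^sub>1\<^sub>7\<close>. Both inequalities reduce, via
  \<open>sin x sin (x + d) = (cos d - cos (2x + d))/2\<close>, to comparing cosines or sines of angles
  determined by \<open>\<beta>\<close>.\<close>

lemma sin_times_sin_shift:
  fixes x d :: real
  shows "sin x * sin (x + d) = (cos d - cos (2*x + d)) / 2"
  by (simp add: sin_times_sin algebra_simps)

lemma two_cos_mult_sin_apex_less:
  fixes \<beta> :: real
  assumes "pi/3 < \<beta>" "\<beta> < pi/2"
  shows "2 * cos \<beta> * sin (pi - 2*\<beta> + pi/3) < sin (\<beta> + pi/3)"
proof -
  define \<alpha> where "\<alpha> = pi - 2*\<beta>"
  have "cos (2*\<beta> + pi/3) = cos (5*pi/3 - 2*\<beta>)"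
    using cos_2pi_minus[of "2*\<beta> + pi/3"] by (simp add: algebra_simps)
  moreover have "cos (2*\<alpha> + pi/3) = cos (7*pi/3 - 4*\<beta>)"
    unfolding \<alpha>_def by (simp add: algebra_simps)
  moreover have "cos (5*pi/3 - 2*\<beta>) < cos (7*pi/3 - 4*\<beta>)"
    using assms by (intro cos_monotone_0_pi) auto
  ultimately have "sin \<alpha> * sin (\<alpha> + pi/3) < sin \<beta> * sin (\<beta> + pi/3)"
    by (simp add: sin_times_sin_shift)
  moreover have "sin \<alpha> = sin \<beta> * (2 * cos \<beta>)"
    unfolding \<alpha>_def by (simp add: sin_double)
  moreover have "sin \<beta> > 0"
    using assms by (intro sin_gt_zero) auto
  ultimately show ?thesis
    unfolding \<alpha>_def by (simp add: mult.assoc)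
qed

lemma sin_base_mult_less_sin_apex_mult:
  fixes \<beta> :: real
  assumes "pi/3 < \<beta>" "\<beta> < pi/2"
  shows "sin (\<beta> + pi/3) * sin (\<beta> + pi/6) < sin (pi - 2*\<beta> + pi/3) * sin (pi - 2*\<beta> + pi/6)"
proof -
  define \<alpha> where "\<alpha> = pi - 2*\<beta>"
  have "sin \<alpha> > 0"
    using assms unfolding \<alpha>_def by (intro sin_gt_zero) auto
  moreover have "2 * cos \<alpha> > 1"
    using assms cos_monotone_0_pi[of \<alpha> "pi/3"] unfolding \<alpha>_def by (simp add: cos_60)
  ultimately have "sin \<alpha> * 1 < sin \<alpha> * (2 * cos \<alpha>)"
    by (intro mult_strict_left_mono)
  moreover have "sin (2*\<beta>) = sin \<alpha>"
    unfolding \<alpha>_def by simp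
  ultimately have "sin (2*\<beta>) < sin (2*\<alpha>)"
    by (simp add: sin_double mult.assoc)
  moreover have product: "sin (x + pi/3) * sin (x + pi/6) = (cos (pi/6) + sin (2*x)) / 2" for x :: real
  proof -
    have "cos (2 * (x + pi/6) + pi/6) = - sin (2*x)"
      by (simp add: algebra_simps cos_add)
    then show ?thesis
      using sin_times_sin_shift[of "x + pi/6" "pi/6"] by (simp add: mult.commute add.assoc)
  qed
  ultimately show ?thesis
    unfolding \<alpha>_def[symmetric] product by simp
qed

lemma isosceles_base_angle:
  fixes a b :: real
  assumes "0 < a" "a < b"
  obtains \<beta> where "pi/3 < \<beta>" "\<beta> < pi/2" "a = 2 * b * cos \<beta>"
proof -
  define k where "k = a / (2*b)"
  have k: "0 < k" "k < 1/2"
    using assms unfolding k_def by (auto simp: field_simps)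
  have "arccos (1/2) < arccos k" "arccos k < arccos 0"
    using k by (intro arccos_less_arccos; simp)+
  moreover have "arccos (1/2) = pi/3"
    using arccos_cos[of "pi/3"] by (simp add: cos_60)
  moreover have "a = 2 * b * cos (arccos k)"
    using assms k by (simp add: cos_arccos) (simp add: k_def)
  ultimately show ?thesis
    using that by simp
qed

lemma opp_angle_isosceles:
  fixes b \<beta> :: real
  assumes "0 < b" "0 \<le> \<beta>" "\<beta> < pi/2"
  shows "opp_angle b b (2 * b * cos \<beta>) = \<beta>"
    and "opp_angle b (2 * b * cos \<beta>) b = \<beta>"
    and "opp_angle (2 * b * cos \<beta>) b b = pi - 2*\<beta>"
proof -
  have "cos \<beta> > 0"
    using assms by (intro cos_gt_zero_pi) auto
  then have "(b\<^sup>2 + (2 * b * cos \<beta>)\<^sup>2 - b\<^sup>2) / (2 * b * (2 * b * cos \<beta>)) = cos \<beta>"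
    and "((2 * b * cos \<beta>)\<^sup>2 + b\<^sup>2 - b\<^sup>2) / (2 * (2 * b * cos \<beta>) * b) = cos \<beta>"
    using assms by (simp_all add: power2_eq_square field_simps)
  moreover have "(b\<^sup>2 + b\<^sup>2 - (2 * b * cos \<beta>)\<^sup>2) / (2 * b * b) = 1 - 2 * (cos \<beta>)\<^sup>2"
    using assms by (simp add: field_simps power2_eq_square)
  moreover have "1 - 2 * (cos \<beta>)\<^sup>2 = cos (pi - 2*\<beta>)"
    by (simp add: cos_double_cos)
  ultimately show "opp_angle b b (2 * b * cos \<beta>) = \<beta>"
    and "opp_angle b (2 * b * cos \<beta>) b = \<beta>"
    and "opp_angle (2 * b * cos \<beta>) b b = pi - 2*\<beta>"
    unfolding opp_angle_def using assms by (simp_all only:) (rule arccos_cos; simp)+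
qed

lemma X15_isosceles:
  fixes A B C :: complex
  assumes "dist A B = b" "dist C A = b" "dist B C = 2 * b * cos \<beta>"
    and "0 < b" "0 \<le> \<beta>" "\<beta> < pi/2"
  shows "X15 A B C = bary A B C (2 * b * cos \<beta> * sin (pi - 2*\<beta> + pi/3))
    (b * sin (\<beta> + pi/3)) (b * sin (\<beta> + pi/3))"
  unfolding X15_def Let_def using assms by (simp add: opp_angle_isosceles)

lemma X17_isosceles:
  fixes A B C :: complex
  assumes "dist A B = b" "dist C A = b" "dist B C = 2 * b * cos \<beta>"
    and "0 < b" "0 \<le> \<beta>" "\<beta> < pi/2"
  shows "X17 A B C = bary A B C (2 * b * cos \<beta> / sin (pi - 2*\<beta> + pi/6))
    (b / sin (\<beta> + pi/6)) (b / sin (\<beta> + pi/6))"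
  unfolding X17_def Let_def using assms by (simp add: opp_angle_isosceles)

lemma dist_bary_median:
  fixes A B C :: complex
  assumes "u + 2 * v \<noteq> 0"
  shows "dist A (bary A B C u v v) = \<bar>v / (u + 2 * v)\<bar> * norm (2*A - B - C)"
proof -
  have "complex_of_real u + 2 * complex_of_real v \<noteq> 0"
    using assms by (metis of_real_add of_real_mult of_real_numeral of_real_eq_0_iff)
  then have "A - bary A B C u v v = complex_of_real (v / (u + 2 * v)) * (2*A - B - C)"
    unfolding bary_def scaleR_conv_of_real by (simp add: field_simps)
  then show ?thesis
    by (simp only: dist_norm norm_mult norm_of_real)
qed

lemma dist_bary_median_less:
  fixes A B C :: complex
  assumes "2*A \<noteq> B + C" "0 < u1" "0 < v1" "0 < u2" "0 < v2" "v1 * u2 < v2 * u1"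
  shows "dist A (bary A B C u1 v1 v1) < dist A (bary A B C u2 v2 v2)"
proof -
  have "v1 / (u1 + 2 * v1) < v2 / (u2 + 2 * v2)"
    using assms(2-6) by (simp add: divide_simps algebra_simps)
  moreover have "norm (2*A - B - C) > 0"
    using assms(1) by (simp add: algebra_simps)
  ultimately have "v1 / (u1 + 2 * v1) * norm (2*A - B - C) < v2 / (u2 + 2 * v2) * norm (2*A - B - C)"
    by (rule mult_strict_right_mono)
  then show ?thesis
    using assms(2-5) by (simp add: dist_bary_median)
qed

lemma not_collinear_imp_not_midpoint:
  fixes A B C :: complex
  assumes "\<not> collinear {A, B, C}"
  shows "2*A \<noteq> B + C"
proof
  assume "2*A = B + C"
  then have "A = midpoint B C"
    unfolding midpoint_def scaleR_conv_of_real by (simp add: field_simps)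
  then show False
    using assms collinear_midpoint[of B C] by (simp add: insert_commute)
qed

theorem theorem3p2:
  fixes A B C :: complex
  assumes "\<not> collinear {A, B, C}"
    and "dist C A = dist A B"
    and "dist A B > dist B C"
  shows "dist A (X2 A B C) < dist A (X15 A B C) \<and> dist A (X15 A B C) < dist A (X17 A B C)"
proof -
  define a b where "a = dist B C" and "b = dist A B"
  have "B \<noteq> C"
    using assms(1) by (auto simp: collinear_2)
  then have "0 < a" "a < b"
    using assms(3) by (simp_all add: a_def b_def)
  then obtain \<beta> where \<beta>: "pi/3 < \<beta>" "\<beta> < pi/2" and a: "a = 2 * b * cos \<beta>"
    by (rule isosceles_base_angle)
  have isosceles: "dist A B = b" "dist C A = b" "dist B C = 2 * b * cos \<beta>" "0 < b" "0 \<le> \<beta>" "\<beta> < pi/2"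
    using assms(2) a \<beta> \<open>0 < a\<close> \<open>a < b\<close> unfolding a_def b_def by linarith+
  have pos: "0 < sin (pi - 2*\<beta> + pi/3)" "0 < sin (\<beta> + pi/3)"
    "0 < sin (pi - 2*\<beta> + pi/6)" "0 < sin (\<beta> + pi/6)" "0 < cos \<beta>"
    using \<beta> by (auto intro!: sin_gt_zero cos_gt_zero_pi)
  have not_midpoint: "2*A \<noteq> B + C"
    using assms(1) by (rule not_collinear_imp_not_midpoint)
  have "b * (2 * cos \<beta> * sin (pi - 2*\<beta> + pi/3)) < b * sin (\<beta> + pi/3)"
    using two_cos_mult_sin_apex_less[OF \<beta>] \<open>0 < b\<close> by (rule mult_strict_left_mono)
  then have "dist A (X2 A B C) < dist A (X15 A B C)"
    unfolding X2_def X15_isosceles[OF isosceles] using not_midpoint pos isosceles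
    by (intro dist_bary_median_less) (simp_all add: mult.assoc)
  moreover have "dist A (X15 A B C) < dist A (X17 A B C)"
    unfolding X15_isosceles[OF isosceles] X17_isosceles[OF isosceles]
    using not_midpoint pos isosceles sin_base_mult_less_sin_apex_mult[OF \<beta>]
    by (intro dist_bary_median_less) (simp_all add: field_simps)
  ultimately show ?thesis ..
qed

end
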